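(* Let $0<\varepsilon_1<\varepsilon_2<1/2$. Then $\varepsilon_1<\phi(\varepsilon_1,\varepsilon_2)<\varepsilon_2$. Furthermore, let $\sigma\in[\varepsilon_1,\varepsilon_2]$ and let $p_1,p_2>0$ with $p_1+p_2\le1$. Then: 1. $(-p_2b_{\sigma,\varepsilon_2},\,p_1b_{\sigma,\varepsilon_1})=\big(-p_2(1-2\varepsilon_2)/(1-2\sigma),\,p_1\varepsilon_1/\sigma\big)$, and for every $x$ in this interval, $0<e_{\sigma,\varepsilon_1,p_1}(-x)<e_{\sigma,\varepsilon_2,p_2}(x)<1/2$. 2. If $\sigma\le\phi(\varepsilon_1,\varepsilon_2)$, then $F_{\sigma,\varepsilon_1,p_1,\varepsilon_2,p_2}$ is (strictly) decreasing on $(-p_2b_{\sigma,\varepsilon_2},0]$. 3. If $\sigma\ge\phi(\varepsilon_1,\varepsilon_2)$, then $F_{\sigma,\varepsilon_1,p_1,\varepsilon_2,p_2}$ is (strictly) increasing on $[0,p_1b_{\sigma,\varepsilon_1})$.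
   Context: Notation: $\overline a=1-a$; $\log$ is base 2. $f_c(t)=1+t\log t+\overline t\log\overline t$ for $t\in[0,1]$ (with $0\log0=0$). For $0<\varepsilon_1<\varepsilon_2<1/2$, $$\phi(\varepsilon_1,\varepsilon_2)=\frac{\ln(\overline{\varepsilon_1}/\overline{\varepsilon_2})}{\ln\big((\overline{\varepsilon_1}\varepsilon_2)/(\overline{\varepsilon_2}\varepsilon_1)\big)}.$$ For $\sigma\in(0,1/2)$ and $\varepsilon\in(0,1/2)$, $b_{\sigma,\varepsilon}=\min\{1,\varepsilon/\sigma,(1-2\varepsilon)/(1-2\sigma)\}$. For $p\in(0,1)$ and $x\in(-pb_{\sigma,\varepsilon},1-p)$, $e_{\sigma,\varepsilon,p}(x)=(p\varepsilon+x\sigma)/(p+x)$ and $f_{\sigma,\varepsilon,p}(x)=(p+x)f_c(e_{\sigma,\varepsilon,p}(x))$. For $\sigma$, $\varepsilon_1<\varepsilon_2$, $p_1,p_2$ as in the claim, $F_{\sigma,\varepsilon_1,p_1,\varepsilon_2,p_2}(x)=f_{\sigma,\varepsilon_1,p_1}(-x)+f_{\sigma,\varepsilon_2,p_2}(x)$ for $x\in(-p_2b_{\sigma,\varepsilon_2},p_1b_{\sigma,\varepsilon_1})$. *)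

theory Defs
  imports Complex_Main
begin

definition xlogx :: "real \<Rightarrow> real" where
  "xlogx t = (if t = 0 then 0 else t * log 2 t)"

definition fc :: "real \<Rightarrow> real" where
  "fc t = 1 + xlogx t + xlogx (1 - t)"

definition phi :: "real \<Rightarrow> real \<Rightarrow> real" where
  "phi e1 e2 = ln ((1 - e1) / (1 - e2)) / ln (((1 - e1) * e2) / ((1 - e2) * e1))"

definition bse :: "real \<Rightarrow> real \<Rightarrow> real" where
  "bse s e = min 1 (min (e / s) ((1 - 2 * e) / (1 - 2 * s)))"

definition ef :: "real \<Rightarrow> real \<Rightarrow> real \<Rightarrow> real \<Rightarrow> real" where
  "ef s e p x = (p * e + x * s) / (p + x)"

definition ff :: "real \<Rightarrow> real \<Rightarrow> real \<Rightarrow> real \<Rightarrow> real" where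
  "ff s e p x = (p + x) * fc (ef s e p x)"

definition FF :: "real \<Rightarrow> real \<Rightarrow> real \<Rightarrow> real \<Rightarrow> real \<Rightarrow> real \<Rightarrow> real" where
  "FF s e1 p1 e2 p2 x = ff s e1 p1 (- x) + ff s e2 p2 x"

end

theory Submission
  imports Defs
begin

(* Put G_s(t) = s ln t + (1 - s) ln (1 - t). Where a = p e + x s and b = p (1 - e) + x (1 - s)
   are positive, f_{s,e,p}(x) = (a + b) + (a ln a + b ln b - (a + b) ln (a + b)) / ln 2 has
   derivative 1 + G_s(e_{s,e,p}(x)) / ln 2, so ln 2 * F'(x) = G_s(e_2(x)) - G_s(e_1(-x)) with
   e_i = e_{s,e_i,p_i}. By Gibbs' inequality G_s increases on (0, s] and decreases on [s, 1), and
   s <= phi(e1, e2) holds exactly when G_s(e2) <= G_s(e1); taking s = e1 and s = e2 gives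
   e1 < phi < e2. For x < 0 in the interval, e_1(-x) lies between e1 and s while e_2(x) lies beyond
   e2, so G_s(e_2(x)) <= G_s(e2) and G_s(e1) <= G_s(e_1(-x)), one of them strictly because e1 < s
   or s < e2; hence F' < 0 when s <= phi. For x > 0 every inequality reverses. *)

definition bern_loglik :: "real \<Rightarrow> real \<Rightarrow> real" where
  "bern_loglik s t = s * ln t + (1 - s) * ln (1 - t)"

lemma bern_loglik_strict_mono:
  assumes "0 < t" "t < u" "u \<le> s" "s < 1"
  shows "bern_loglik s t < bern_loglik s u"
proof (rule DERIV_pos_imp_increasing_open[OF \<open>t < u\<close>])
  have deriv: "(bern_loglik s has_real_derivative s / z - (1 - s) / (1 - z)) (at z)"
    if "t \<le> z" "z \<le> u" for z
    unfolding bern_loglik_def[abs_def] using that assms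
    by (auto intro!: derivative_eq_intros)
  show "\<exists>y. (bern_loglik s has_real_derivative y) (at z) \<and> 0 < y" if "t < z" "z < u" for z
  proof -
    have "(1 - s) * z < s * (1 - z)" using that assms by (simp add: algebra_simps)
    then have "0 < s / z - (1 - s) / (1 - z)"
      using that assms by (simp add: field_simps)
    with deriv[of z] that show ?thesis by auto
  qed
  show "continuous_on {t..u} (bern_loglik s)"
    using deriv by (intro continuous_at_imp_continuous_on ballI DERIV_isCont) auto
qed

lemma bern_loglik_swap: "bern_loglik s t = bern_loglik (1 - s) (1 - t)"
  unfolding bern_loglik_def by simp

lemma bern_loglik_strict_antimono:
  assumes "0 < s" "s \<le> t" "t < u" "u < 1"
  shows "bern_loglik s u < bern_loglik s t"
  using bern_loglik_strict_mono[of "1 - u" "1 - t" "1 - s"] assms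
  by (simp add: bern_loglik_swap[of s])

lemma bern_loglik_mono:
  "0 < t \<Longrightarrow> t \<le> u \<Longrightarrow> u \<le> s \<Longrightarrow> s < 1 \<Longrightarrow> bern_loglik s t \<le> bern_loglik s u"
  using bern_loglik_strict_mono[of t u s] by (cases "t = u") auto

lemma bern_loglik_antimono:
  "0 < s \<Longrightarrow> s \<le> t \<Longrightarrow> t \<le> u \<Longrightarrow> u < 1 \<Longrightarrow> bern_loglik s u \<le> bern_loglik s t"
  using bern_loglik_strict_antimono[of s t u] by (cases "t = u") auto

lemma phi_le_iff:
  assumes "0 < e1" "e1 < e2" "e2 < 1"
  shows "s \<le> phi e1 e2 \<longleftrightarrow> bern_loglik s e2 \<le> bern_loglik s e1"
    and "phi e1 e2 \<le> s \<longleftrightarrow> bern_loglik s e1 \<le> bern_loglik s e2"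
proof -
  have "1 < ((1 - e1) * e2) / ((1 - e2) * e1)"
    using assms by (simp add: mult_strict_mono)
  then have pos: "0 < ln (((1 - e1) * e2) / ((1 - e2) * e1))" by simp
  have logs: "ln (((1 - e1) * e2) / ((1 - e2) * e1)) = ln (1 - e1) + ln e2 - ln (1 - e2) - ln e1"
    "ln ((1 - e1) / (1 - e2)) = ln (1 - e1) - ln (1 - e2)"
    using assms by (simp_all add: ln_div ln_mult)
  have diff: "bern_loglik s e2 - bern_loglik s e1 =
      s * ln (((1 - e1) * e2) / ((1 - e2) * e1)) - ln ((1 - e1) / (1 - e2))"
    unfolding bern_loglik_def logs by (simp add: algebra_simps)
  show "s \<le> phi e1 e2 \<longleftrightarrow> bern_loglik s e2 \<le> bern_loglik s e1"
    "phi e1 e2 \<le> s \<longleftrightarrow> bern_loglik s e1 \<le> bern_loglik s e2"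
    unfolding phi_def using pos diff by (auto simp: pos_le_divide_eq pos_divide_le_eq)
qed

lemma phi_bounds:
  assumes "0 < e1" "e1 < e2" "e2 < 1"
  shows "e1 < phi e1 e2" "phi e1 e2 < e2"
proof -
  have "bern_loglik e1 e2 < bern_loglik e1 e1"
    using bern_loglik_strict_antimono[of e1 e1 e2] assms by simp
  then show "e1 < phi e1 e2" using phi_le_iff(2)[OF assms, of e1] by linarith
  have "bern_loglik e2 e1 < bern_loglik e2 e2"
    using bern_loglik_strict_mono[of e1 e2 e2] assms by simp
  then show "phi e1 e2 < e2" using phi_le_iff(1)[OF assms, of e2] by linarith
qed

lemma ef_compare_e:
  assumes "0 < p + x"
  shows "e \<le> ef s e p x \<longleftrightarrow> 0 \<le> x * (s - e)" "e < ef s e p x \<longleftrightarrow> 0 < x * (s - e)"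
    and "ef s e p x \<le> e \<longleftrightarrow> x * (s - e) \<le> 0" "ef s e p x < e \<longleftrightarrow> x * (s - e) < 0"
proof -
  have diff: "ef s e p x - e = x * (s - e) / (p + x)"
    using assms unfolding ef_def by (simp add: field_simps)
  have "e \<le> ef s e p x \<longleftrightarrow> 0 \<le> x * (s - e) / (p + x)"
    "e < ef s e p x \<longleftrightarrow> 0 < x * (s - e) / (p + x)"
    "ef s e p x \<le> e \<longleftrightarrow> x * (s - e) / (p + x) \<le> 0"
    "ef s e p x < e \<longleftrightarrow> x * (s - e) / (p + x) < 0"
    by (simp_all add: diff[symmetric])
  with assms show "e \<le> ef s e p x \<longleftrightarrow> 0 \<le> x * (s - e)" "e < ef s e p x \<longleftrightarrow> 0 < x * (s - e)"
    "ef s e p x \<le> e \<longleftrightarrow> x * (s - e) \<le> 0" "ef s e p x < e \<longleftrightarrow> x * (s - e) < 0"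
    by (simp_all add: zero_le_divide_iff zero_less_divide_iff divide_le_0_iff divide_less_0_iff)
qed

lemma ef_compare_s:
  assumes "0 < p" "0 < p + x"
  shows "s \<le> ef s e p x \<longleftrightarrow> s \<le> e" "ef s e p x \<le> s \<longleftrightarrow> e \<le> s"
proof -
  have diff: "ef s e p x - s = p * (e - s) / (p + x)"
    using assms unfolding ef_def by (simp add: field_simps)
  have "s \<le> ef s e p x \<longleftrightarrow> 0 \<le> p * (e - s) / (p + x)"
    "ef s e p x \<le> s \<longleftrightarrow> p * (e - s) / (p + x) \<le> 0"
    by (simp_all add: diff[symmetric])
  then show "s \<le> ef s e p x \<longleftrightarrow> s \<le> e" "ef s e p x \<le> s \<longleftrightarrow> e \<le> s"
    using assms by (simp_all add: zero_le_divide_iff divide_le_0_iff zero_le_mult_iff mult_le_0_iff)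
qed

definition unnorm_neg_entropy :: "real \<Rightarrow> real \<Rightarrow> real" where
  "unnorm_neg_entropy a b = a * ln a + b * ln b - (a + b) * ln (a + b)"

lemma unnorm_neg_entropy_has_real_derivative:
  assumes "(a has_real_derivative a') (at x)" "(b has_real_derivative b') (at x)"
    and "0 < a x" "0 < b x"
  shows "((\<lambda>y. unnorm_neg_entropy (a y) (b y)) has_real_derivative
      a' * ln (a x / (a x + b x)) + b' * ln (b x / (a x + b x))) (at x)"
proof -
  have "0 < a x + b x" using assms by simp
  then have "((\<lambda>y. unnorm_neg_entropy (a y) (b y)) has_real_derivative
      a' * ln (a x) + a' + (b' * ln (b x) + b') - ((a' + b') * ln (a x + b x) + (a' + b'))) (at x)"
    unfolding unnorm_neg_entropy_def using assms \<open>0 < a x + b x\<close>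
    by (auto intro!: derivative_eq_intros)
  then show ?thesis
    using assms by (simp add: ln_div algebra_simps)
qed

lemma scaled_fc_eq:
  assumes "0 < a" "0 < b"
  shows "(a + b) * fc (a / (a + b)) = (a + b) + unnorm_neg_entropy a b / ln 2"
proof -
  have compl: "1 - a / (a + b) = b / (a + b)" using assms by (simp add: field_simps)
  have "(a + b) * fc (a / (a + b)) = (a + b) + a * log 2 (a / (a + b)) + b * log 2 (b / (a + b))"
    unfolding fc_def xlogx_def compl using assms by (simp add: distrib_left)
  also have "\<dots> = (a + b) + unnorm_neg_entropy a b / ln 2"
    unfolding unnorm_neg_entropy_def using assms by (simp add: log_def ln_div field_simps)
  finally show ?thesis .
qed

lemma ff_has_real_derivative:
  assumes "0 < p + x" "0 < ef s e p x" "ef s e p x < 1"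
  shows "(ff s e p has_real_derivative 1 + bern_loglik s (ef s e p x) / ln 2) (at x)"
proof -
  define a where "a y = p * e + y * s" for y
  define b where "b y = p * (1 - e) + y * (1 - s)" for y
  define S where "S = {y. 0 < a y \<and> 0 < b y}"
  have ab: "a y + b y = p + y" for y
    unfolding a_def b_def by (simp add: algebra_simps)
  have ef_ab: "ef s e p y = a y / (a y + b y)" for y
    unfolding ab by (simp add: ef_def a_def)
  have ax: "a x = (p + x) * ef s e p x"
    using assms unfolding ef_ab ab by simp
  moreover have "b x = (p + x) - a x"
    using ab[of x] by simp
  ultimately have "b x = (p + x) * (1 - ef s e p x)"
    by (simp add: algebra_simps)
  with ax assms have "x \<in> S" and pos: "0 < a x" "0 < b x"
    unfolding S_def by simp_all
  have "open S"
    unfolding S_def a_def b_def by (intro open_Collect_conj open_Collect_less continuous_intros)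
  have ff_eq: "ff s e p y = (p + y) + unnorm_neg_entropy (a y) (b y) / ln 2" if "y \<in> S" for y
    using that scaled_fc_eq[of "a y" "b y"] unfolding ff_def ef_ab ab[symmetric] S_def by simp
  have "(a has_real_derivative s) (at x)" "(b has_real_derivative 1 - s) (at x)"
    unfolding a_def[abs_def] b_def[abs_def] by (auto intro!: derivative_eq_intros)
  from unnorm_neg_entropy_has_real_derivative[OF this pos]
  have "((\<lambda>y. (p + y) + unnorm_neg_entropy (a y) (b y) / ln 2) has_real_derivative
      1 + (s * ln (a x / (a x + b x)) + (1 - s) * ln (b x / (a x + b x))) / ln 2) (at x)"
    by (auto intro!: derivative_eq_intros)
  moreover have "s * ln (a x / (a x + b x)) + (1 - s) * ln (b x / (a x + b x))
      = bern_loglik s (ef s e p x)"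
    using pos unfolding bern_loglik_def ef_ab by (simp add: diff_divide_eq_iff)
  ultimately have "((\<lambda>y. (p + y) + unnorm_neg_entropy (a y) (b y) / ln 2) has_real_derivative
      1 + bern_loglik s (ef s e p x) / ln 2) (at x)"
    by simp
  then show ?thesis
    by (rule has_field_derivative_transform_within_open[OF _ \<open>open S\<close> \<open>x \<in> S\<close>])
      (simp add: ff_eq)
qed

lemma FF_has_real_derivative:
  assumes "0 < p1 - x" "0 < ef s e1 p1 (- x)" "ef s e1 p1 (- x) < 1"
    and "0 < p2 + x" "0 < ef s e2 p2 x" "ef s e2 p2 x < 1"
  shows "(FF s e1 p1 e2 p2 has_real_derivative
      (bern_loglik s (ef s e2 p2 x) - bern_loglik s (ef s e1 p1 (- x))) / ln 2) (at x)"
proof -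
  have "((\<lambda>y. ff s e1 p1 (- y)) has_real_derivative
      (1 + bern_loglik s (ef s e1 p1 (- x)) / ln 2) * (- 1)) (at x)"
    using assms(1-3)
    by (intro DERIV_chain2[OF ff_has_real_derivative]) (auto intro!: derivative_eq_intros)
  then have "((\<lambda>y. ff s e1 p1 (- y) + ff s e2 p2 y) has_real_derivative
      (1 + bern_loglik s (ef s e1 p1 (- x)) / ln 2) * (- 1)
        + (1 + bern_loglik s (ef s e2 p2 x) / ln 2)) (at x)"
    using assms(4-6) by (intro DERIV_add ff_has_real_derivative) auto
  moreover have "FF s e1 p1 e2 p2 = (\<lambda>y. ff s e1 p1 (- y) + ff s e2 p2 y)"
    by (simp add: fun_eq_iff FF_def)
  ultimately show ?thesis by (simp add: diff_divide_distrib)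
qed

lemma bse_below:
  assumes "0 < e" "e \<le> s" "s < 1/2"
  shows "bse s e = e / s"
proof -
  have "e / s \<le> 1" "1 \<le> (1 - 2 * e) / (1 - 2 * s)" using assms by simp_all
  then show ?thesis unfolding bse_def by (simp add: min.absorb1 min.absorb2)
qed

lemma bse_above:
  assumes "0 < s" "s \<le> e" "s < 1/2"
  shows "bse s e = (1 - 2 * e) / (1 - 2 * s)"
proof -
  have "(1 - 2 * e) / (1 - 2 * s) \<le> 1" "1 \<le> e / s" using assms by simp_all
  then show ?thesis unfolding bse_def by (simp add: min.absorb1 min.absorb2)
qed

lemma ef_window:
  assumes "0 < e1" "e1 < e2" "e1 \<le> s" "s \<le> e2" "s < 1/2" "0 < p1" "0 < p2"
    and "- p2 * (1 - 2 * e2) / (1 - 2 * s) < x" "x < p1 * e1 / s"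
  shows "0 < p1 - x" "0 < p2 + x" "0 < ef s e1 p1 (- x)" "ef s e1 p1 (- x) \<le> s"
    "s \<le> ef s e2 p2 x" "ef s e2 p2 x < 1/2" "ef s e1 p1 (- x) < ef s e2 p2 x"
proof -
  have "0 < s" "0 < 1 - 2 * s" using assms by auto
  then have right: "x * s < p1 * e1" and left: "- p2 * (1 - 2 * e2) < x * (1 - 2 * s)"
    using assms(8,9) pos_less_divide_eq pos_divide_less_eq by blast+
  have "p1 * e1 \<le> p1 * s" using assms by simp
  with right have "x * s < p1 * s" by linarith
  with \<open>0 < s\<close> show "0 < p1 - x" by simp
  have "p2 * (1 - 2 * e2) \<le> p2 * (1 - 2 * s)" using assms by simp
  with left have "0 < (p2 + x) * (1 - 2 * s)" by (simp add: algebra_simps)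
  with \<open>0 < 1 - 2 * s\<close> show "0 < p2 + x" by (simp add: zero_less_mult_iff)
  show "0 < ef s e1 p1 (- x)"
    using right \<open>0 < p1 - x\<close> unfolding ef_def by simp
  have "ef s e1 p1 (- x) \<le> s \<longleftrightarrow> e1 \<le> s" "s \<le> ef s e1 p1 (- x) \<longleftrightarrow> s \<le> e1"
    "s \<le> ef s e2 p2 x \<longleftrightarrow> s \<le> e2" "ef s e2 p2 x \<le> s \<longleftrightarrow> e2 \<le> s"
    using ef_compare_s[where e = e1 and p = p1 and x = "- x"] ef_compare_s[where e = e2 and p = p2]
      assms \<open>0 < p1 - x\<close> \<open>0 < p2 + x\<close> by auto
  then show "ef s e1 p1 (- x) \<le> s" "s \<le> ef s e2 p2 x" "ef s e1 p1 (- x) < ef s e2 p2 x"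
    using assms by (cases "e1 < s"; auto)+
  show "ef s e2 p2 x < 1/2"
    using left \<open>0 < p2 + x\<close> unfolding ef_def by (simp add: pos_divide_less_eq algebra_simps)
qed

lemma FF_has_real_derivative_window:
  assumes "0 < e1" "e1 < e2" "e1 \<le> s" "s \<le> e2" "s < 1/2" "0 < p1" "0 < p2"
    and "- p2 * (1 - 2 * e2) / (1 - 2 * s) < x" "x < p1 * e1 / s"
  shows "(FF s e1 p1 e2 p2 has_real_derivative
      (bern_loglik s (ef s e2 p2 x) - bern_loglik s (ef s e1 p1 (- x))) / ln 2) (at x)"
  using ef_window[OF assms] assms(5) by (intro FF_has_real_derivative) auto

lemma bern_loglik_ef_less_left:
  assumes "0 < e1" "e1 < e2" "e2 < 1/2" "e1 \<le> s" "s \<le> e2" "0 < p1" "0 < p2" "s \<le> phi e1 e2"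
    and "- p2 * (1 - 2 * e2) / (1 - 2 * s) < t" "t < 0"
  shows "bern_loglik s (ef s e2 p2 t) < bern_loglik s (ef s e1 p1 (- t))"
proof -
  have "0 < s" "s < 1/2" using assms by auto
  moreover have "0 < p1 * e1 / s" using assms \<open>0 < s\<close> by simp
  ultimately have "t < p1 * e1 / s" using assms by linarith
  note win = ef_window[OF assms(1,2,4,5) \<open>s < 1/2\<close> assms(6,7,9) this]
  note cmp1 = ef_compare_e[where e = e1 and p = p1 and x = "- t"]
    and cmp2 = ef_compare_e[where e = e2 and p = p2 and x = t]
  define E1 E2 where "E1 = ef s e1 p1 (- t)" and "E2 = ef s e2 p2 t"
  have E1: "0 < E1" "E1 \<le> s" and E2: "s \<le> E2" "E2 < 1"
    using win unfolding E1_def E2_def by auto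
  have "0 \<le> (- t) * (s - e1)" "0 \<le> t * (s - e2)"
    using assms by (intro mult_nonneg_nonneg mult_nonpos_nonpos; simp)+
  then have "e1 \<le> E1" "e2 \<le> E2"
    using cmp1(1) cmp2(1) win unfolding E1_def E2_def by simp_all
  have chain: "bern_loglik s E2 \<le> bern_loglik s e2" "bern_loglik s e2 \<le> bern_loglik s e1"
      "bern_loglik s e1 \<le> bern_loglik s E1"
    using bern_loglik_antimono[of s e2 E2] phi_le_iff(1)[of e1 e2 s] bern_loglik_mono[of e1 E1 s]
      assms E1 E2 \<open>e1 \<le> E1\<close> \<open>e2 \<le> E2\<close> \<open>0 < s\<close> by linarith+
  consider "e1 < s" | "s < e2" using assms by linarith
  then have "bern_loglik s E2 < bern_loglik s E1"
  proof cases
    case 1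
    then have "0 < (- t) * (s - e1)" using assms by (intro mult_pos_pos) auto
    then have "e1 < E1" using cmp1(2) win unfolding E1_def by simp
    then have "bern_loglik s e1 < bern_loglik s E1"
      using bern_loglik_strict_mono[of e1 E1 s] assms E1 \<open>s < 1/2\<close> by linarith
    with chain show ?thesis by linarith
  next
    case 2
    then have "0 < t * (s - e2)" using assms by (intro mult_neg_neg) auto
    then have "e2 < E2" using cmp2(2) win unfolding E2_def by simp
    then have "bern_loglik s E2 < bern_loglik s e2"
      using bern_loglik_strict_antimono[of s e2 E2] assms E2 \<open>0 < s\<close> by linarith
    with chain show ?thesis by linarith
  qed
  then show ?thesis unfolding E1_def E2_def .
qed

lemma bern_loglik_ef_less_right:
  assumes "0 < e1" "e1 < e2" "e2 < 1/2" "e1 \<le> s" "s \<le> e2" "0 < p1" "0 < p2" "phi e1 e2 \<le> s"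
    and "0 < t" "t < p1 * e1 / s"
  shows "bern_loglik s (ef s e1 p1 (- t)) < bern_loglik s (ef s e2 p2 t)"
proof -
  have "0 < s" "s < 1/2" "0 < 1 - 2 * e2" using assms by auto
  moreover have "- p2 * (1 - 2 * e2) / (1 - 2 * s) < 0"
    using assms \<open>0 < 1 - 2 * e2\<close> \<open>s < 1/2\<close> by simp
  ultimately have "- p2 * (1 - 2 * e2) / (1 - 2 * s) < t" using assms by linarith
  note win = ef_window[OF assms(1,2,4,5) \<open>s < 1/2\<close> assms(6,7) this assms(10)]
  note cmp1 = ef_compare_e[where e = e1 and p = p1 and x = "- t"]
    and cmp2 = ef_compare_e[where e = e2 and p = p2 and x = t]
  define E1 E2 where "E1 = ef s e1 p1 (- t)" and "E2 = ef s e2 p2 t"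
  have E1: "0 < E1" "E1 \<le> s" and E2: "s \<le> E2" "E2 < 1"
    using win unfolding E1_def E2_def by auto
  have "(- t) * (s - e1) \<le> 0" "t * (s - e2) \<le> 0"
    using assms by (intro mult_nonpos_nonneg mult_nonneg_nonpos; simp)+
  then have "E1 \<le> e1" "E2 \<le> e2"
    using cmp1(3) cmp2(3) win unfolding E1_def E2_def by simp_all
  have chain: "bern_loglik s E1 \<le> bern_loglik s e1" "bern_loglik s e1 \<le> bern_loglik s e2"
      "bern_loglik s e2 \<le> bern_loglik s E2"
    using bern_loglik_mono[of E1 e1 s] phi_le_iff(2)[of e1 e2 s] bern_loglik_antimono[of s E2 e2]
      assms E1 E2 \<open>E1 \<le> e1\<close> \<open>E2 \<le> e2\<close> \<open>0 < s\<close> by linarith+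
  consider "e1 < s" | "s < e2" using assms by linarith
  then have "bern_loglik s E1 < bern_loglik s E2"
  proof cases
    case 1
    then have "(- t) * (s - e1) < 0" using assms by (intro mult_neg_pos) auto
    then have "E1 < e1" using cmp1(4) win unfolding E1_def by simp
    then have "bern_loglik s E1 < bern_loglik s e1"
      using bern_loglik_strict_mono[of E1 e1 s] assms E1 \<open>s < 1/2\<close> by linarith
    with chain show ?thesis by linarith
  next
    case 2
    then have "t * (s - e2) < 0" using assms by (intro mult_pos_neg) auto
    then have "E2 < e2" using cmp2(4) win unfolding E2_def by simp
    then have "bern_loglik s e2 < bern_loglik s E2"
      using bern_loglik_strict_antimono[of s E2 e2] assms E2 \<open>0 < s\<close> by linarith
    with chain show ?thesis by linarith
  qed
  then show ?thesis unfolding E1_def E2_def .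
qed

lemma FF_strict_antimono_left:
  assumes "0 < e1" "e1 < e2" "e2 < 1/2" "e1 \<le> s" "s \<le> e2" "0 < p1" "0 < p2" "s \<le> phi e1 e2"
    and "- p2 * (1 - 2 * e2) / (1 - 2 * s) < x" "x < y" "y \<le> 0"
  shows "FF s e1 p1 e2 p2 y < FF s e1 p1 e2 p2 x"
proof -
  have "s < 1/2" and R: "0 < p1 * e1 / s" using assms by auto
  have deriv: "(FF s e1 p1 e2 p2 has_real_derivative
      (bern_loglik s (ef s e2 p2 t) - bern_loglik s (ef s e1 p1 (- t))) / ln 2) (at t)"
    if "x \<le> t" "t \<le> y" for t
  proof (rule FF_has_real_derivative_window[OF assms(1,2,4,5) \<open>s < 1/2\<close> assms(6,7)])
    show "- p2 * (1 - 2 * e2) / (1 - 2 * s) < t" "t < p1 * e1 / s"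
      using that assms R by linarith+
  qed
  show ?thesis
  proof (rule DERIV_neg_imp_decreasing_open[OF \<open>x < y\<close>])
    fix t assume "x < t" "t < y"
    then have "bern_loglik s (ef s e2 p2 t) < bern_loglik s (ef s e1 p1 (- t))"
      using assms by (intro bern_loglik_ef_less_left) auto
    then have "(bern_loglik s (ef s e2 p2 t) - bern_loglik s (ef s e1 p1 (- t))) / ln 2 < 0"
      by (simp add: divide_neg_pos)
    with deriv[of t] \<open>x < t\<close> \<open>t < y\<close>
    show "\<exists>z. (FF s e1 p1 e2 p2 has_real_derivative z) (at t) \<and> z < 0"
      by auto
  next
    show "continuous_on {x..y} (FF s e1 p1 e2 p2)"
      using deriv by (intro continuous_at_imp_continuous_on ballI DERIV_isCont) auto
  qed
qed

lemma FF_strict_mono_right: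
  assumes "0 < e1" "e1 < e2" "e2 < 1/2" "e1 \<le> s" "s \<le> e2" "0 < p1" "0 < p2" "phi e1 e2 \<le> s"
    and "0 \<le> x" "x < y" "y < p1 * e1 / s"
  shows "FF s e1 p1 e2 p2 x < FF s e1 p1 e2 p2 y"
proof -
  have "s < 1/2" and L: "- p2 * (1 - 2 * e2) / (1 - 2 * s) < 0" using assms by auto
  have deriv: "(FF s e1 p1 e2 p2 has_real_derivative
      (bern_loglik s (ef s e2 p2 t) - bern_loglik s (ef s e1 p1 (- t))) / ln 2) (at t)"
    if "x \<le> t" "t \<le> y" for t
  proof (rule FF_has_real_derivative_window[OF assms(1,2,4,5) \<open>s < 1/2\<close> assms(6,7)])
    show "- p2 * (1 - 2 * e2) / (1 - 2 * s) < t" "t < p1 * e1 / s"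
      using that assms L by linarith+
  qed
  show ?thesis
  proof (rule DERIV_pos_imp_increasing_open[OF \<open>x < y\<close>])
    fix t assume "x < t" "t < y"
    then have "bern_loglik s (ef s e1 p1 (- t)) < bern_loglik s (ef s e2 p2 t)"
      using assms by (intro bern_loglik_ef_less_right) auto
    then have "0 < (bern_loglik s (ef s e2 p2 t) - bern_loglik s (ef s e1 p1 (- t))) / ln 2"
      by simp
    with deriv[of t] \<open>x < t\<close> \<open>t < y\<close>
    show "\<exists>z. (FF s e1 p1 e2 p2 has_real_derivative z) (at t) \<and> 0 < z"
      by auto
  next
    show "continuous_on {x..y} (FF s e1 p1 e2 p2)"
      using deriv by (intro continuous_at_imp_continuous_on ballI DERIV_isCont) auto
  qed
qed

theorem lemma7:
  fixes e1 e2 :: real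
  assumes "0 < e1" and "e1 < e2" and "e2 < 1/2"
  shows "e1 < phi e1 e2 \<and> phi e1 e2 < e2 \<and>
    (\<forall>s p1 p2. e1 \<le> s \<and> s \<le> e2 \<and> 0 < p1 \<and> 0 < p2 \<and> p1 + p2 \<le> 1 \<longrightarrow>
      ({- p2 * bse s e2 <..< p1 * bse s e1} = {- p2 * (1 - 2 * e2) / (1 - 2 * s) <..< p1 * e1 / s}
       \<and> (\<forall>x\<in>{- p2 * bse s e2 <..< p1 * bse s e1}.
            0 < ef s e1 p1 (- x) \<and> ef s e1 p1 (- x) < ef s e2 p2 x \<and> ef s e2 p2 x < 1/2))
      \<and> (s \<le> phi e1 e2 \<longrightarrow>
            (\<forall>x y. x \<in> {- p2 * bse s e2 <.. 0} \<and> y \<in> {- p2 * bse s e2 <.. 0} \<and> x < y \<longrightarrow>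
               FF s e1 p1 e2 p2 y < FF s e1 p1 e2 p2 x))
      \<and> (phi e1 e2 \<le> s \<longrightarrow>
            (\<forall>x y. x \<in> {0 ..< p1 * bse s e1} \<and> y \<in> {0 ..< p1 * bse s e1} \<and> x < y \<longrightarrow>
               FF s e1 p1 e2 p2 x < FF s e1 p1 e2 p2 y)))"
  (is "_ \<and> _ \<and> (\<forall>s p1 p2. _ \<longrightarrow> ?claim s p1 p2)")
proof -
  have "e2 < 1" using assms by simp
  note phi = phi_bounds[OF assms(1,2) this]
  have "?claim s p1 p2" if "e1 \<le> s" "s \<le> e2" "0 < p1" "0 < p2" for s p1 p2
  proof -
    have "0 < s" "s < 1/2" using that assms by auto
    then have "- p2 * bse s e2 = - p2 * (1 - 2 * e2) / (1 - 2 * s)" "p1 * bse s e1 = p1 * e1 / s"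
      using bse_above[of s e2] bse_below[of e1 s] that assms by simp_all
    then show ?thesis
      using ef_window[OF assms(1,2) that(1,2) \<open>s < 1/2\<close> that(3,4)]
        FF_strict_antimono_left[OF assms that] FF_strict_mono_right[OF assms that]
      by auto
  qed
  with phi show ?thesis by blast
qed

end
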